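(* Let $n\geq 1$. Then $H_n(x)=\sum_{i=0}^{n}e(i,n)x^i$, where, with $C(a,b)=\binom{a}{b}$, $$e(i,n)=\begin{cases}3^{i}, & 0\leq i\leq n-\lfloor n/2\rfloor-1,\\[4pt] \dfrac{2^{n}C(i,n-i)}{2^{i+1}}+3^{i}\left(1+2^{n}\displaystyle\sum_{j=n-\lfloor n/2\rfloor}^{i}\frac{2n-5j}{j\,6^{j}}C(j,n-j)\right), & n-\lfloor n/2\rfloor\leq i\leq n-1,\\[4pt] 1, & i=n.\end{cases}$$
   Context: The Stern polynomials $B_n(t)\in\mathbb{Z}[t]$ are defined by $B_0(t)=0$, $B_1(t)=1$, and for $n\geq 1$: $B_{2n}(t)=tB_n(t)$, $B_{2n+1}(t)=B_n(t)+B_{n+1}(t)$. For $n\geq1$ let $e(n)=\deg B_n(t)$. For $n\geq 0$ let $H_n(x)=\sum_{m=1}^{2^n}x^{e(m)}$ and for $i,n\geq0$ let $e(i,n)=|\{m\in[1,2^n]\cap\mathbb{Z}:\;e(m)=i\}|$. *)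

theory Defs
  imports Complex_Main "HOL-Computational_Algebra.Polynomial"
begin

function stern :: "nat \<Rightarrow> int poly" where
  "stern n = (if n = 0 then 0 else if n = 1 then 1
              else if even n then [:0, 1:] * stern (n div 2)
              else stern (n div 2) + stern (n div 2 + 1))"
  by auto
termination
  by (relation "measure id") (auto elim!: oddE)

declare stern.simps [simp del]

definition sdeg :: "nat \<Rightarrow> nat" where
  "sdeg m = degree (stern m)"

definition H :: "nat \<Rightarrow> real \<Rightarrow> real" where
  "H n x = (\<Sum>m = 1..2^n. x ^ sdeg m)"

definition ecount :: "nat \<Rightarrow> nat \<Rightarrow> nat" where
  "ecount i n = card {m \<in> {1..2^n}. sdeg m = i}"

end

theory Submission
  imports Defs
begin

(* 1. Stern polynomials have nonnegative coefficients, hence e(2k) = e(k) + 1 and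
      e(2k+1) = max (e k) (e (k+1)); consequently consecutive degrees differ by at most one.
   2. Sort each m of the level [2^n, 2^(n+1)) by the jump d = e(m+1) - e(m) \<in> {1, 0, -1}
      and form the level polynomials L_d(n) = \<Sum> x^e(m) over such m.  The recurrences for e
      give a linear recurrence L(n+1) = M L(n), which is solved in closed form through the
      polynomials U_n with U_(n+2) = X U_(n+1) + 2 X U_n, whose coefficients are
      2^(n-i) C(i, n-i).
   3. Summing the levels yields the identity
      2 (1 - 3X) H_n = X^n - 3 X^(n+1) + 2 - (1 + X) U_n - 2 U_(n+1),
      i.e. a first-order recurrence 2 e(i+1,n) - 6 e(i,n) = (explicit) for the counts.
   4. The closed formula of the theorem satisfies the same recurrence and starts at 1,
      so it equals e(i,n) for i < n; the remaining statements are read off directly. *)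

section \<open>Stern polynomials and their degrees\<close>

lemma stern_0 [simp]: "stern 0 = 0"
  by (simp add: stern.simps)

lemma stern_1 [simp]: "stern (Suc 0) = 1"
  by (subst stern.simps) simp

lemma stern_double: "k \<ge> 1 \<Longrightarrow> stern (2 * k) = [:0, 1:] * stern k"
  by (subst stern.simps) simp

lemma stern_odd: "k \<ge> 1 \<Longrightarrow> stern (Suc (2 * k)) = stern k + stern (Suc k)"
  by (subst stern.simps) simp

lemma binary_induct [case_names zero one double odd]:
  fixes P :: "nat \<Rightarrow> bool"
  assumes "P 0" "P 1"
    and double: "\<And>k. k \<ge> 1 \<Longrightarrow> P k \<Longrightarrow> P (2 * k)"
    and odd: "\<And>k. k \<ge> 1 \<Longrightarrow> P k \<Longrightarrow> P (Suc k) \<Longrightarrow> P (Suc (2 * k))"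
  shows "P n"
proof (induction n rule: less_induct)
  case (less n)
  show ?case
  proof (cases "n \<le> 1")
    case True
    then show ?thesis using assms(1,2) by (cases n) auto
  next
    case False
    define k where "k = n div 2"
    have "k \<ge> 1" "k < n" using False by (auto simp: k_def)
    moreover have "n = 2 * k \<or> n = Suc (2 * k)" unfolding k_def by presburger
    ultimately show ?thesis using double odd less by auto
  qed
qed

lemma stern_coeff_nonneg: "coeff (stern n) i \<ge> 0"
proof (induction n arbitrary: i rule: binary_induct)
  case (double k)
  then show ?case by (cases i) (simp_all add: stern_double)
qed (simp_all add: coeff_1 stern_odd add_nonneg_nonneg)

lemma nonneg_coeffs_add_eq_0:
  fixes p q :: "'a::ordered_comm_monoid_add poly"
  assumes "\<And>i. coeff p i \<ge> 0" "\<And>i. coeff q i \<ge> 0" "p + q = 0"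
  shows "p = 0"
proof (rule poly_eqI)
  fix i
  have "coeff p i + coeff q i = 0" using assms(3) by (metis coeff_0 coeff_add)
  then show "coeff p i = coeff 0 i" using add_nonneg_eq_0_iff[OF assms(1,2)] by simp
qed

lemma degree_add_nonneg_coeffs:
  fixes p q :: "'a::ordered_comm_monoid_add poly"
  assumes p: "\<And>i. coeff p i \<ge> 0" and q: "\<And>i. coeff q i \<ge> 0"
  shows "degree (p + q) = max (degree p) (degree q)"
proof -
  have le_sum: "degree a \<le> degree (a + b)"
    if a: "\<And>i. coeff a i \<ge> 0" and b: "\<And>i. coeff b i \<ge> 0" for a b :: "'a poly"
  proof (cases "a = 0")
    case False
    then have "coeff a (degree a) + coeff b (degree a) \<noteq> 0"
      using add_nonneg_eq_0_iff[OF a b] by simp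
    then show ?thesis by (intro le_degree) simp
  qed simp
  show ?thesis
    using degree_add_le_max[of p q] le_sum[OF p q] le_sum[OF q p] by (simp add: add.commute)
qed

lemma stern_nonzero: "n \<ge> 1 \<Longrightarrow> stern n \<noteq> 0"
proof (induction n rule: binary_induct)
  case (odd k)
  then show ?case
    using nonneg_coeffs_add_eq_0[OF stern_coeff_nonneg stern_coeff_nonneg, of k "Suc k"]
    by (auto simp: stern_odd)
qed (simp_all add: stern_double)

lemma sdeg_1 [simp]: "sdeg (Suc 0) = 0"
  by (simp add: sdeg_def)

lemma sdeg_double: "k \<ge> 1 \<Longrightarrow> sdeg (2 * k) = sdeg k + 1"
  using stern_nonzero[of k] by (simp add: sdeg_def stern_double degree_mult_eq)

lemma sdeg_odd: "sdeg (Suc (2 * k)) = max (sdeg k) (sdeg (Suc k))"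
proof (cases "k = 0")
  case False
  then show ?thesis
    by (simp add: sdeg_def stern_odd degree_add_nonneg_coeffs stern_coeff_nonneg)
qed (simp add: sdeg_def)

lemma sdeg_pow2: "sdeg (2 ^ n) = n"
  by (induction n) (simp_all add: sdeg_double)

lemma sdeg_Suc_cases:
  "sdeg (k + 1) = sdeg k + 1 \<or> sdeg (k + 1) = sdeg k \<or> sdeg (k + 1) + 1 = sdeg k"
proof (induction k rule: binary_induct)
  case zero
  then show ?case by (simp add: sdeg_def)
next
  case one
  then show ?case using sdeg_double[of 1] by (simp add: numeral_2_eq_2)
next
  case (double k)
  then show ?case using sdeg_double[of k] sdeg_odd[of k] by auto
next
  case (odd k)
  then show ?case using sdeg_double[of "k + 1"] sdeg_odd[of k] by (auto simp: algebra_simps)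
qed

lemma sdeg_le: "m \<le> 2 ^ n \<Longrightarrow> sdeg m \<le> n"
proof (induction n arbitrary: m)
  case 0
  then have "m = 0 \<or> m = 1" by auto
  then show ?case by (auto simp: sdeg_def)
next
  case (Suc n)
  consider k where "m = 2 * k" | k where "m = Suc (2 * k)"
    by (metis evenE oddE Suc_eq_plus1)
  then show ?case
  proof cases
    case (1 k)
    then show ?thesis
      using Suc sdeg_double[of k] by (cases "k = 0") (simp_all add: sdeg_def)
  next
    case (2 k)
    then have "k + 1 \<le> 2 ^ n" using Suc.prems by simp
    then show ?thesis using Suc.IH[of k] Suc.IH[of "k + 1"] 2 sdeg_odd[of k] by simp
  qed
qed

definition Hpoly :: "nat \<Rightarrow> real poly" where
  "Hpoly n = (\<Sum>m = 1..2 ^ n. monom 1 (sdeg m))"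

lemma coeff_Hpoly: "coeff (Hpoly n) i = real (ecount i n)"
proof -
  have "coeff (Hpoly n) i = (\<Sum>m\<in>{1..2 ^ n}. if sdeg m = i then 1 else 0)"
    by (simp add: Hpoly_def coeff_sum coeff_monom)
  also have "\<dots> = (\<Sum>m\<in>{m \<in> {1..2 ^ n}. sdeg m = i}. 1)"
    by (rule sum.inter_filter[OF finite_atLeastAtMost, symmetric])
  finally show ?thesis by (simp add: ecount_def)
qed

lemma ecount_gt: "i > n \<Longrightarrow> ecount i n = 0"
  using sdeg_le[of _ n] by (fastforce simp: ecount_def)

lemma H_expand: "H n x = (\<Sum>i = 0..n. real (ecount i n) * x ^ i)"
proof -
  have "H n x = (\<Sum>i\<in>{0..n}. \<Sum>m\<in>{m. m \<in> {1..2 ^ n} \<and> sdeg m = i}. x ^ sdeg m)"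
    unfolding H_def by (rule sum.group[symmetric]) (auto simp: sdeg_le)
  also have "\<dots> = (\<Sum>i = 0..n. real (ecount i n) * x ^ i)"
    by (intro sum.cong refl) (simp add: ecount_def)
  finally show ?thesis .
qed

section \<open>Level polynomials sorted by the jump of the degree\<close>

definition X :: "real poly" where
  "X = [:0, 1:]"

lemma X_pow: "X ^ n = monom 1 n"
  by (induction n) (simp_all add: X_def monom_Suc)

lemma coeff_X_mult: "coeff (X * p) i = (if i = 0 then 0 else coeff p (i - 1))"
  by (cases i) (simp_all add: X_def)

lemma coeff_numeral: "coeff (numeral k :: 'a::comm_semiring_1 poly) i = (if i = 0 then numeral k else 0)"
  by (simp add: numeral_poly coeff_pCons split: nat.split)

definition jump_monom :: "int \<Rightarrow> nat \<Rightarrow> real poly" where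
  "jump_monom d k = (if int (sdeg (k + 1)) - int (sdeg k) = d then monom 1 (sdeg k) else 0)"

lemma monom_sdeg_split: "monom 1 (sdeg k) = jump_monom 1 k + jump_monom 0 k + jump_monom (-1) k"
  using sdeg_Suc_cases[of k] unfolding jump_monom_def by auto

lemma jump_monom_children:
  assumes "k \<ge> 1"
  shows "jump_monom 1 (2 * k) + jump_monom 1 (2 * k + 1) = X * jump_monom 1 k + jump_monom 0 k"
    and "jump_monom 0 (2 * k) + jump_monom 0 (2 * k + 1) = X * jump_monom 1 k + jump_monom (-1) k"
    and "jump_monom (-1) (2 * k) + jump_monom (-1) (2 * k + 1)
           = X * jump_monom 0 k + X * jump_monom (-1) k"
proof -
  have deg: "sdeg (2 * k) = sdeg k + 1" "sdeg (2 * k + 1) = max (sdeg k) (sdeg (k + 1))"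
    "sdeg (2 * k + 1 + 1) = sdeg (k + 1) + 1"
    using assms sdeg_double sdeg_odd sdeg_double[of "k + 1"] by (simp_all add: algebra_simps)
  note cases = sdeg_Suc_cases[of k]
  show "jump_monom 1 (2 * k) + jump_monom 1 (2 * k + 1) = X * jump_monom 1 k + jump_monom 0 k"
    using cases unfolding jump_monom_def deg X_def by (elim disjE) (simp_all add: monom_Suc)
  show "jump_monom 0 (2 * k) + jump_monom 0 (2 * k + 1) = X * jump_monom 1 k + jump_monom (-1) k"
    using cases unfolding jump_monom_def deg X_def by (elim disjE) (simp_all add: monom_Suc)
  show "jump_monom (-1) (2 * k) + jump_monom (-1) (2 * k + 1)
          = X * jump_monom 0 k + X * jump_monom (-1) k"
    using cases unfolding jump_monom_def deg X_def by (elim disjE) (simp_all add: monom_Suc)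
qed

definition level :: "int \<Rightarrow> nat \<Rightarrow> real poly" where
  "level d n = (\<Sum>k\<in>{2 ^ n..<2 ^ (n + 1)}. jump_monom d k)"

lemma sum_pairs:
  fixes f :: "nat \<Rightarrow> 'a::comm_monoid_add"
  assumes "a < b"
  shows "(\<Sum>k\<in>{2 * a..<2 * b}. f k) = (\<Sum>k\<in>{a..<b}. f (2 * k) + f (2 * k + 1))"
proof -
  have "{2 * a..<2 * b} = {2 * a..Suc (2 * (b - 1))}" "{a..<b} = {a..b - 1}"
    using assms by auto
  then show ?thesis using sum.in_pairs[of f a "b - 1"] by simp
qed

lemma level_Suc:
  "level 1 (Suc n) = X * level 1 n + level 0 n"
  "level 0 (Suc n) = X * level 1 n + level (-1) n"
  "level (-1) (Suc n) = X * level 0 n + X * level (-1) n"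
proof -
  let ?I = "{2 ^ n..<2 ^ (n + 1)} :: nat set"
  have split: "level d (Suc n) = (\<Sum>k\<in>?I. jump_monom d (2 * k) + jump_monom d (2 * k + 1))" for d
    unfolding level_def using sum_pairs[of "2 ^ n" "2 ^ (n + 1)" "jump_monom d"] by simp
  have pos: "k \<in> ?I \<Longrightarrow> k \<ge> 1" for k
    using one_le_power[of "2::nat" n] by auto
  have "level 1 (Suc n) = (\<Sum>k\<in>?I. X * jump_monom 1 k + jump_monom 0 k)"
    unfolding split using jump_monom_children(1) pos by (intro sum.cong) auto
  then show "level 1 (Suc n) = X * level 1 n + level 0 n"
    by (simp add: level_def sum_distrib_left sum.distrib)
  have "level 0 (Suc n) = (\<Sum>k\<in>?I. X * jump_monom 1 k + jump_monom (-1) k)"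
    unfolding split using jump_monom_children(2) pos by (intro sum.cong) auto
  then show "level 0 (Suc n) = X * level 1 n + level (-1) n"
    by (simp add: level_def sum_distrib_left sum.distrib)
  have "level (-1) (Suc n) = (\<Sum>k\<in>?I. X * jump_monom 0 k + X * jump_monom (-1) k)"
    unfolding split using jump_monom_children(3) pos by (intro sum.cong) auto
  then show "level (-1) (Suc n) = X * level 0 n + X * level (-1) n"
    by (simp add: level_def sum_distrib_left sum.distrib)
qed

section \<open>Closed form of the level polynomials\<close>

fun U :: "nat \<Rightarrow> real poly" where
  "U 0 = 1"
| "U (Suc 0) = X"
| "U (Suc (Suc n)) = X * U (Suc n) + 2 * X * U n"

lemma level_closed_form:
  "2 * level 1 n = X ^ n + U n
   \<and> 2 * level 0 n = U (Suc n) - X * U n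
   \<and> 2 * level (-1) n = X * U n - X ^ Suc n"
proof (induction n)
  case 0
  have "level d 0 = jump_monom d 1" for d
    by (simp add: level_def numeral_2_eq_2)
  moreover have "sdeg (Suc (Suc 0)) = 1"
    using sdeg_double[of 1] by (simp add: numeral_2_eq_2)
  ultimately show ?case by (simp add: jump_monom_def)
next
  case (Suc n)
  then have IH: "2 * level 1 n = X ^ n + U n" "2 * level 0 n = U (Suc n) - X * U n"
    "2 * level (-1) n = X * U n - X ^ Suc n" by auto
  have "2 * level 1 (Suc n) = X * (2 * level 1 n) + 2 * level 0 n"
    "2 * level 0 (Suc n) = X * (2 * level 1 n) + 2 * level (-1) n"
    "2 * level (-1) (Suc n) = X * (2 * level 0 n) + X * (2 * level (-1) n)"
    by (simp_all add: level_Suc algebra_simps)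
  then show ?case unfolding IH by (simp add: algebra_simps)
qed

text \<open>Passing from \<open>2^n\<close> to \<open>2^(n+1)\<close> adds one full level, shifting the endpoint \<open>2^n\<close>.\<close>

lemma Hpoly_Suc: "Hpoly (Suc n) = Hpoly n + (level 1 n + level 0 n + level (-1) n) - X ^ n + X ^ Suc n"
proof -
  let ?f = "\<lambda>m. monom (1::real) (sdeg m)"
  have bounds: "(1::nat) \<le> 2 ^ n" "(2::nat) ^ n \<le> 2 ^ (n + 1)" by simp_all
  have "Hpoly n = sum ?f {1..<2 ^ n} + ?f (2 ^ n)"
    unfolding Hpoly_def atLeastLessThanSuc_atLeastAtMost[symmetric] using bounds by simp
  moreover have "Hpoly (Suc n) = sum ?f {1..<2 ^ (n + 1)} + ?f (2 ^ (n + 1))"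
    unfolding Hpoly_def atLeastLessThanSuc_atLeastAtMost[symmetric] by simp
  moreover have "sum ?f {1..<2 ^ (n + 1)} = sum ?f {1..<2 ^ n} + sum ?f {2 ^ n..<2 ^ (n + 1)}"
    by (rule sum.atLeastLessThan_concat[OF bounds, symmetric])
  moreover have "sum ?f {2 ^ n..<2 ^ (n + 1)} = level 1 n + level 0 n + level (-1) n"
    unfolding level_def sum.distrib[symmetric] by (intro sum.cong refl monom_sdeg_split)
  ultimately show ?thesis
    by (simp add: sdeg_pow2 X_pow algebra_simps del: power_Suc)
qed

lemma Hpoly_identity:
  "2 * (1 - 3 * X) * Hpoly n = X ^ n - 3 * X ^ Suc n + 2 - (1 + X) * U n - 2 * U (Suc n)"
proof (induction n)
  case 0
  then show ?case by (simp add: Hpoly_def sdeg_def algebra_simps)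
next
  case (Suc n)
  have levels: "2 * (level 1 n + level 0 n + level (-1) n) = X ^ n - X ^ Suc n + U n + U (Suc n)"
    using level_closed_form[of n] by (simp add: algebra_simps)
  have "2 * (1 - 3 * X) * Hpoly (Suc n) = 2 * (1 - 3 * X) * Hpoly n
      + (1 - 3 * X) * (2 * (level 1 n + level 0 n + level (-1) n))
      - 2 * (1 - 3 * X) * X ^ n + 2 * (1 - 3 * X) * X ^ Suc n"
    unfolding Hpoly_Suc by (simp add: algebra_simps)
  also have "\<dots> = X ^ Suc n - 3 * X ^ Suc (Suc n) + 2 - (1 + X) * U (Suc n) - 2 * U (Suc (Suc n))"
    unfolding Suc.IH levels by (simp add: algebra_simps)
  finally show ?case .
qed

section \<open>Coefficient recurrence for the counts\<close>

definition Ucoeff :: "nat \<Rightarrow> nat \<Rightarrow> real" where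
  "Ucoeff n i = (if i \<le> n then 2 ^ (n - i) * real (i choose (n - i)) else 0)"

lemma Ucoeff_rec: "Ucoeff (Suc (Suc n)) (Suc i) = Ucoeff (Suc n) i + 2 * Ucoeff n i"
proof (cases "i \<le> n")
  case True
  then have "Suc n - i = Suc (n - i)" by simp
  with True show ?thesis by (simp add: Ucoeff_def algebra_simps)
next
  case False
  then show ?thesis by (cases "i = Suc n") (auto simp: Ucoeff_def)
qed

lemma coeff_U: "coeff (U n) i = Ucoeff n i"
proof (induction n arbitrary: i rule: U.induct)
  case 1
  then show ?case by (cases i) (auto simp: Ucoeff_def)
next
  case 2
  then show ?case by (cases i) (auto simp: Ucoeff_def X_def coeff_pCons split: nat.splits)
next
  case (3 n)
  then show ?case
    by (cases i) (simp_all add: coeff_X_mult mult.assoc numeral_mult_conv_smult Ucoeff_rec,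
        simp add: Ucoeff_def)
qed

lemma ecount_recurrence:
  shows "2 * real (ecount 0 n) = (if n = 0 then 1 else 0) + 2 - Ucoeff n 0 - 2 * Ucoeff (Suc n) 0"
    and "2 * real (ecount (Suc j) n) - 6 * real (ecount j n)
           = (if Suc j = n then 1 else 0) - 3 * (if j = n then 1 else 0)
             - Ucoeff n (Suc j) - Ucoeff n j - 2 * Ucoeff (Suc n) (Suc j)"
proof -
  have "2 * Hpoly n - 6 * (X * Hpoly n) = X ^ n - 3 * X ^ Suc n + 2 - U n - X * U n - 2 * U (Suc n)"
    using Hpoly_identity[of n] by (simp add: algebra_simps)
  then have coeffs: "coeff (2 * Hpoly n - 6 * (X * Hpoly n)) i
      = coeff (X ^ n - 3 * X ^ Suc n + 2 - U n - X * U n - 2 * U (Suc n)) i" for i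
    by simp
  show "2 * real (ecount 0 n) = (if n = 0 then 1 else 0) + 2 - Ucoeff n 0 - 2 * Ucoeff (Suc n) 0"
    using coeffs[of 0]
    by (simp add: coeff_Hpoly coeff_X_mult numeral_mult_conv_smult coeff_numeral X_pow coeff_U)
  show "2 * real (ecount (Suc j) n) - 6 * real (ecount j n)
          = (if Suc j = n then 1 else 0) - 3 * (if j = n then 1 else 0)
            - Ucoeff n (Suc j) - Ucoeff n j - 2 * Ucoeff (Suc n) (Suc j)"
    using coeffs[of "Suc j"]
    by (simp add: coeff_Hpoly coeff_X_mult numeral_mult_conv_smult coeff_numeral X_pow coeff_U)
qed

definition closed_form :: "nat \<Rightarrow> nat \<Rightarrow> real" where
  "closed_form n i = 2 ^ n * real (i choose (n - i)) / 2 ^ (i + 1)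
     + 3 ^ i * (1 + 2 ^ n * (\<Sum>j = n - n div 2..i.
         (2 * real n - 5 * real j) / (real j * 6 ^ j) * real (j choose (n - j))))"

lemma binomial_absorb_real:
  "real (Suc j) * real (j choose k) = (real (Suc j) - real k) * real (Suc j choose k)"
proof (cases "k \<le> Suc j")
  case True
  have "(Suc j - k) * (Suc j choose k) = Suc j * (j choose k)"
    using binomial_absorb_comp[of "Suc j" k] by simp
  then have "real ((Suc j - k) * (Suc j choose k)) = real (Suc j * (j choose k))" by simp
  then show ?thesis using True by (simp only: of_nat_mult of_nat_diff)
next
  case False
  then show ?thesis by (simp add: binomial_eq_0)
qed

lemma closed_form_rec:
  assumes n: "n = Suc j + k" and "k \<ge> 1"
  shows "2 * closed_form n (Suc j) - 6 * closed_form n j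
           = - Ucoeff n (Suc j) - Ucoeff n j - 2 * Ucoeff (Suc n) (Suc j)"
proof -
  define t where "t l = (2 * real n - 5 * real l) / (real l * 6 ^ l) * real (l choose (n - l))" for l
  define S where "S = (\<Sum>l = n - n div 2..j. t l)"
  define x where "x = real (Suc j choose k)"
  define y where "y = real (j choose k)"
  define z where "z = real (j choose Suc k)"
  have diffs: "n - Suc j = k" "n - j = Suc k" "Suc n - Suc j = Suc k"
    using assms by auto
  have sum_Suc: "(\<Sum>l = n - n div 2..Suc j. t l) = S + t (Suc j)"
  proof (cases "n - n div 2 \<le> Suc j")
    case False
    then have "Suc j choose (n - Suc j) = 0" by (intro binomial_eq_0) linarith
    with False show ?thesis by (simp add: S_def t_def)
  qed (simp add: S_def sum.cl_ivl_Suc)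
  have pow_n: "(2::real) ^ n = 2 ^ Suc j * 2 ^ k"
    by (simp add: n power_add)
  have last_term: "3 ^ Suc j * 2 ^ n * t (Suc j)
      = 2 ^ k * (2 * real n - 5 * real (Suc j)) / real (Suc j) * x"
  proof -
    have "(6::real) ^ Suc j = 2 ^ Suc j * 3 ^ Suc j"
      by (simp add: power_mult_distrib[symmetric])
    then show ?thesis
      unfolding t_def x_def diffs pow_n by (simp add: field_simps del: of_nat_Suc power_Suc)
  qed
  have G_Suc: "closed_form n (Suc j) = 2 ^ k / 2 * x + 3 ^ Suc j * (1 + 2 ^ n * S)
      + 2 ^ k * (2 * real n - 5 * real (Suc j)) / real (Suc j) * x"
    unfolding closed_form_def t_def[symmetric] sum_Suc last_term[symmetric] diffs
    by (simp add: x_def pow_n algebra_simps)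
  have G_j: "closed_form n j = 2 ^ k * z + 3 ^ j * (1 + 2 ^ n * S)"
    unfolding closed_form_def t_def[symmetric] S_def[symmetric] diffs
    by (simp add: z_def pow_n)
  have U_vals: "Ucoeff n (Suc j) = 2 ^ k * x" "Ucoeff n j = 2 * 2 ^ k * z"
    "Ucoeff (Suc n) (Suc j) = 2 * 2 ^ k * (y + z)"
    using assms diffs by (simp_all add: Ucoeff_def x_def y_def z_def)
  have absorb: "real (Suc j) * y = (real (Suc j) - real k) * x"
    unfolding x_def y_def by (rule binomial_absorb_real)
  have key: "real n * x + real (Suc j) * y = 2 * real (Suc j) * x"
    using absorb by (simp add: n algebra_simps)
  then have "8 * 2 ^ k * (real n * x + real (Suc j) * y) = 8 * 2 ^ k * (2 * real (Suc j) * x)"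
    by simp
  then show ?thesis
    unfolding G_Suc G_j U_vals by (simp add: field_simps del: of_nat_Suc)
qed

text \<open>Both sides start at \<open>1\<close> and obey the same recurrence, hence agree below \<open>n\<close>.\<close>

lemma ecount_eq_closed_form: "n \<ge> 1 \<Longrightarrow> i \<le> n - 1 \<Longrightarrow> real (ecount i n) = closed_form n i"
proof (induction i)
  case 0
  then have "real (ecount 0 n) = 1"
    using ecount_recurrence(1)[of n] by (cases n) (simp_all add: Ucoeff_def)
  moreover have "closed_form n 0 = 1"
    using 0 by (simp add: closed_form_def)
  ultimately show ?case by simp
next
  case (Suc j)
  then have "j \<noteq> n" "Suc j \<noteq> n" by auto
  then have "2 * real (ecount (Suc j) n) - 6 * real (ecount j n)
      = - Ucoeff n (Suc j) - Ucoeff n j - 2 * Ucoeff (Suc n) (Suc j)"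
    using ecount_recurrence(2)[of j n] by simp
  moreover have "2 * closed_form n (Suc j) - 6 * closed_form n j
      = - Ucoeff n (Suc j) - Ucoeff n j - 2 * Ucoeff (Suc n) (Suc j)"
    using Suc.prems by (intro closed_form_rec[of n j "n - Suc j"]) auto
  ultimately show ?case using Suc by simp
qed

text \<open>Below \<open>n - \<lfloor>n/2\<rfloor>\<close> the binomial and the sum in the formula vanish.\<close>

lemma closed_form_low: "i \<le> n - n div 2 - 1 \<Longrightarrow> n \<ge> 1 \<Longrightarrow> closed_form n i = 3 ^ i"
proof -
  assume i: "i \<le> n - n div 2 - 1" "n \<ge> 1"
  then have "i choose (n - i) = 0" by (intro binomial_eq_0) linarith
  moreover have "{n - n div 2..i} = {}" using i by auto
  ultimately show ?thesis by (simp add: closed_form_def)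
qed

text \<open>Only \<open>m = 2^n\<close> reaches the top degree \<open>n\<close>; here read off from the recurrence.\<close>

lemma ecount_top: "n \<ge> 1 \<Longrightarrow> real (ecount n n) = 1"
  using ecount_recurrence(2)[of n n] ecount_gt[of n "Suc n"] by (simp add: Ucoeff_def)

theorem mainTheorem7:
  fixes n :: nat
  assumes "n \<ge> 1"
  shows "(\<forall>x::real. H n x = (\<Sum>i = 0..n. real (ecount i n) * x ^ i))
    \<and> (\<forall>i. i \<le> n - n div 2 - 1 \<longrightarrow> real (ecount i n) = 3 ^ i)
    \<and> (\<forall>i. n - n div 2 \<le> i \<and> i \<le> n - 1 \<longrightarrow>
         real (ecount i n) =
           2 ^ n * real (i choose (n - i)) / 2 ^ (i + 1)
           + 3 ^ i * (1 + 2 ^ n * (\<Sum>j = n - n div 2..i.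
               (2 * real n - 5 * real j) / (real j * 6 ^ j) * real (j choose (n - j)))))
    \<and> real (ecount n n) = 1"
proof (intro conjI allI impI)
  show "H n x = (\<Sum>i = 0..n. real (ecount i n) * x ^ i)" for x
    by (rule H_expand)
  show "real (ecount i n) = 3 ^ i" if "i \<le> n - n div 2 - 1" for i
    using that assms ecount_eq_closed_form[of n i] closed_form_low[of i n] by simp
  show "real (ecount i n) = 2 ^ n * real (i choose (n - i)) / 2 ^ (i + 1)
      + 3 ^ i * (1 + 2 ^ n * (\<Sum>j = n - n div 2..i.
          (2 * real n - 5 * real j) / (real j * 6 ^ j) * real (j choose (n - j))))"
    if "n - n div 2 \<le> i \<and> i \<le> n - 1" for i
    using that assms ecount_eq_closed_form[of n i] by (simp add: closed_form_def)
  show "real (ecount n n) = 1"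
    using assms by (rule ecount_top)
qed

end
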